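(* Let $s,t\ge 0$, $r\in\mathbb R$, $\alpha,\beta\in\mathbb R$, and let $$B=\exp\!\big(r p_0+t\,R_{\beta/2}\,p_1\,R_{-\beta/2}\big)\exp\!\big(s\,R_\alpha f_1 R_{-\alpha}\big)\in\mathrm{SL}_3(\mathbb R),$$ where $p_0=\mathrm{diag}(2,-1,-1)$, $p_1=\mathrm{diag}(0,\tfrac12,-\tfrac12)$, $f_1=\begin{pmatrix}0&1&0\\1&0&0\\0&0&0\end{pmatrix}$. Let $\rho\in\hom_0(\mathrm{PSL}_2(\mathbb Z),\mathrm{Isom}(X))$ be given by $\rho(a)([M])=[BB^TM^*]$ and $\rho(b)([M])=[R_{2\pi/3}M]$, and set $\vartheta=2\alpha-\beta$. Then $$\mathrm{tr}(\rho(baba))=\mathrm{tr}(\rho(baba)^{-1})=-\tfrac32\cosh(2s)\cosh(2t)+\tfrac94\cosh^2(2s)-\tfrac34-3\sin^2(\vartheta)\sinh^4(s)\sinh^2(t).$$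
   Context: $X=\mathrm{SL}_3(\mathbb R)/\mathrm{SO}(3)$; $\mathrm{SL}_3(\mathbb R)$ acts by $[M]\mapsto[gM]$ and orientation-preserving isometries are identified with matrices in $\mathrm{SL}_3(\mathbb R)$; $M^*=(M^{-1})^T$, and $[M]\mapsto[BB^TM^*]$ is the inversion at $[B]$. $R_\theta=\begin{pmatrix}1&0&0\\0&\cos\theta&-\sin\theta\\0&\sin\theta&\cos\theta\end{pmatrix}$ and $\exp$ is the matrix exponential. $\mathrm{PSL}_2(\mathbb Z)=\langle a,b\mid a^2=b^3=1\rangle$; $\hom_0(\mathrm{PSL}_2(\mathbb Z),\mathrm{Isom}(X))$ is the set of homomorphisms with $\rho(a)$ an inversion and $\rho(b)$ conjugate to $[M]\mapsto[R_{2\pi/3}M]$. *)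

theory Defs
  imports "HOL-Analysis.Analysis"
begin

type_synonym mat3 = "real^3^3"

text \<open>Matrix powers and the matrix exponential (the library's exp on real^3^3
 would be entrywise, so we define the matrix exponential by its power series).\<close>
fun matpow :: "mat3 \<Rightarrow> nat \<Rightarrow> mat3" where
  "matpow A 0 = mat 1"
| "matpow A (Suc n) = A ** matpow A n"

definition mexp :: "mat3 \<Rightarrow> mat3" where
  "mexp A = (\<Sum>n. (1 / fact n) *\<^sub>R matpow A n)"

definition mstar :: "mat3 \<Rightarrow> mat3" where
  "mstar M = transpose (matrix_inv M)"

definition SL3 :: "mat3 set" where
  "SL3 = {M. det M = 1}"

definition SO3 :: "mat3 set" where
  "SO3 = {K. transpose K ** K = mat 1 \<and> det K = 1}"

text \<open>Points of X = SL3(R)/SO(3) are the cosets [M] = M SO(3).\<close>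
definition cls :: "mat3 \<Rightarrow> mat3 set" where
  "cls M = (\<lambda>K. M ** K) ` SO3"

definition Xpts :: "mat3 set set" where
  "Xpts = cls ` SL3"

definition act :: "mat3 \<Rightarrow> mat3 set \<Rightarrow> mat3 set" where
  "act g P = (\<lambda>M. g ** M) ` P"

definition inv_at :: "mat3 \<Rightarrow> mat3 set \<Rightarrow> mat3 set" where
  "inv_at B P = (\<lambda>M. B ** transpose B ** mstar M) ` P"

definition iso_matrix :: "(mat3 set \<Rightarrow> mat3 set) \<Rightarrow> mat3" where
  "iso_matrix F = (THE g. g \<in> SL3 \<and> (\<forall>P\<in>Xpts. F P = act g P))"

definition Rot :: "real \<Rightarrow> mat3" where
  "Rot \<theta> = vector [vector [1, 0, 0], vector [0, cos \<theta>, - sin \<theta>], vector [0, sin \<theta>, cos \<theta>]]"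

definition p0 :: mat3 where
  "p0 = vector [vector [2, 0, 0], vector [0, -1, 0], vector [0, 0, -1]]"

definition p1 :: mat3 where
  "p1 = vector [vector [0, 0, 0], vector [0, 1/2, 0], vector [0, 0, -1/2]]"

definition f1 :: mat3 where
  "f1 = vector [vector [0, 1, 0], vector [1, 0, 0], vector [0, 0, 0]]"

definition Bmat :: "real \<Rightarrow> real \<Rightarrow> real \<Rightarrow> real \<Rightarrow> real \<Rightarrow> mat3" where
  "Bmat r s t \<alpha> \<beta> =
     mexp (r *\<^sub>R p0 + t *\<^sub>R (Rot (\<beta>/2) ** p1 ** Rot (-\<beta>/2)))
     ** mexp (s *\<^sub>R (Rot \<alpha> ** f1 ** Rot (-\<alpha>)))"

definition rho_a :: "real \<Rightarrow> real \<Rightarrow> real \<Rightarrow> real \<Rightarrow> real \<Rightarrow> mat3 set \<Rightarrow> mat3 set" where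
  "rho_a r s t \<alpha> \<beta> = inv_at (Bmat r s t \<alpha> \<beta>)"

definition rho_b :: "mat3 set \<Rightarrow> mat3 set" where
  "rho_b = act (Rot (2 * pi / 3))"

end

theory Submission
  imports Defs
begin

text \<open>
  With Q = B B^T and R the rotation by 2\<pi>/3, the two inversions and rotations compose to
  [M] \<mapsto> [R Q R Q^-1 M]. A matrix of SL(3) acting trivially on X is conjugated into SO(3)
  by all of SL(3), hence commutes with every Gram matrix M M^T and is the identity; so the
  matrix of \<rho>(baba) is g = R Q R Q^-1.

  Diagonalizing both exponentials gives Q = R(\<beta>/2) D R(\<phi>) exp(2s f1) R(-\<phi>) D R(-\<beta>/2)
  with \<phi> = \<alpha> - \<beta>/2 and D = diag(e^(2r), e^(t/2-r), e^(-t/2-r)). The rotation R(\<beta>/2) and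
  the r-part of D commute with R and drop out of tr g, which leaves a polynomial identity in
  e^(t/2), cosh 2s, sinh 2s, cos \<phi> and sin \<phi>. Finally Q^-1 is the same expression with
  (r, s, t) negated, transposition gives tr g^-1 = tr (R Q^-1 R Q), and the closed form is
  even in (s, t).
\<close>

lemma matrix_inv_eq:
  fixes A B :: "'a::field^'n^'n"
  assumes "A ** B = mat 1"
  shows "matrix_inv A = B"
proof -
  have BA: "B ** A = mat 1"
    using assms matrix_left_right_inverse by blast
  have inv: "A ** matrix_inv A = mat 1 \<and> matrix_inv A ** A = mat 1"
    unfolding matrix_inv_def by (rule someI[of _ B]) (simp add: assms BA)
  have "matrix_inv A = matrix_inv A ** (A ** B)"
    using assms by simp
  also have "\<dots> = B"
    using inv by (simp add: matrix_mul_assoc)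
  finally show ?thesis .
qed

lemma matrix_inv_right:
  fixes A :: "'a::field^'n^'n"
  assumes "invertible A"
  shows "A ** matrix_inv A = mat 1"
  using assms matrix_inv_eq unfolding invertible_def by metis

lemma matrix_inv_left:
  fixes A :: "'a::field^'n^'n"
  assumes "invertible A"
  shows "matrix_inv A ** A = mat 1"
  using matrix_inv_right[OF assms] matrix_left_right_inverse by blast

lemma invertible_matrix_inv:
  fixes A :: "'a::field^'n^'n"
  assumes "invertible A"
  shows "invertible (matrix_inv A)"
  using matrix_inv_left[OF assms] invertible_left_inverse matrix_left_right_inverse by blast

lemma matrix_inv_transpose:
  fixes A :: "'a::field^'n^'n"
  assumes "invertible A"
  shows "matrix_inv (transpose A) = transpose (matrix_inv A)"
  by (rule matrix_inv_eq) (metis matrix_inv_left[OF assms] matrix_transpose_mul transpose_mat)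

lemma matrix_inv_mult:
  fixes A B :: "'a::field^'n^'n"
  assumes "invertible A" "invertible B"
  shows "matrix_inv (A ** B) = matrix_inv B ** matrix_inv A"
  by (rule matrix_inv_eq)
    (metis matrix_inv_right[OF assms(1)] matrix_inv_right[OF assms(2)] matrix_mul_assoc matrix_mul_rid)

lemma det_matrix_inv:
  fixes A :: "'a::field^'n^'n"
  assumes "invertible A"
  shows "det (matrix_inv A) = 1 / det A"
  using assms by (metis det_I det_mul invertible_det_nz matrix_inv_left nonzero_eq_divide_eq)

lemma trace_transpose: "trace (transpose (A::'a::semiring_1^'n^'n)) = trace A"
  by (simp add: trace_def transpose_def)

lemma trace_conj:
  fixes C C' X :: "'a::field^'n^'n"
  assumes "C ** C' = mat 1"
  shows "trace (C ** X ** C') = trace X"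
proof -
  have "C' ** C = mat 1"
    using assms matrix_left_right_inverse by blast
  then show ?thesis
    by (metis matrix_mul_assoc matrix_mul_lid trace_mul_sym)
qed

lemma trace_RXRY_congruence:
  fixes R C D X Y :: "'a::field^'n^'n"
  assumes "C ** R = R ** C" "transpose C ** R = R ** transpose C" "transpose C ** D = mat 1"
  shows "trace (R ** (C ** X ** transpose C) ** R ** (D ** Y ** transpose D)) = trace (R ** X ** R ** Y)"
proof -
  have CRD: "transpose C ** R ** D = R"
    using assms(2,3) by (simp flip: matrix_mul_assoc)
  have "transpose D ** C = mat 1"
    using arg_cong[OF assms(3), of transpose] by (simp add: matrix_transpose_mul)
  then have CD: "C ** transpose D = mat 1"
    using matrix_left_right_inverse by blast
  have "R ** (C ** X ** transpose C) ** R ** (D ** Y ** transpose D) =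
      (R ** C) ** X ** (transpose C ** R ** D) ** Y ** transpose D"
    by (simp only: matrix_mul_assoc)
  also have "\<dots> = C ** (R ** X ** R ** Y) ** transpose D"
    unfolding assms(1)[symmetric] CRD by (simp only: matrix_mul_assoc)
  finally show ?thesis
    by (simp only: trace_conj[OF CD])
qed

lemma trace_matrix_inv_RXRY:
  fixes R Q Q' :: "'a::field^'n^'n"
  assumes R: "R ** transpose R = mat 1" and Q: "Q ** Q' = mat 1" "transpose Q = Q" "transpose Q' = Q'"
  shows "trace (matrix_inv (R ** Q ** R ** Q')) = trace (R ** Q' ** R ** Q)"
proof -
  have Q'Q: "Q' ** Q = mat 1"
    using Q(1) matrix_left_right_inverse by blast
  have "R ** Q ** R ** Q' ** (Q ** transpose R ** Q' ** transpose R) =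
      R ** Q ** R ** (Q' ** Q) ** transpose R ** Q' ** transpose R"
    by (simp only: matrix_mul_assoc)
  also have "\<dots> = R ** Q ** (R ** transpose R) ** Q' ** transpose R"
    by (simp only: Q'Q matrix_mul_rid matrix_mul_assoc)
  also have "\<dots> = R ** (Q ** Q') ** transpose R"
    by (simp only: R matrix_mul_rid matrix_mul_assoc)
  finally have "matrix_inv (R ** Q ** R ** Q') = Q ** transpose R ** Q' ** transpose R"
    using Q(1) R by (intro matrix_inv_eq) simp
  also have "\<dots> = transpose (R ** Q' ** R ** Q)"
    using Q(2,3) by (simp add: matrix_transpose_mul matrix_mul_assoc)
  finally show ?thesis
    by (simp add: trace_transpose)
qed

definition M3 :: "real \<Rightarrow> real \<Rightarrow> real \<Rightarrow> real \<Rightarrow> real \<Rightarrow> real \<Rightarrow> real \<Rightarrow> real \<Rightarrow> real \<Rightarrow> mat3" where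
  "M3 a b c d e f g h i = vector [vector [a, b, c], vector [d, e, f], vector [g, h, i]]"

abbreviation diag3 :: "real \<Rightarrow> real \<Rightarrow> real \<Rightarrow> mat3" where
  "diag3 a b c \<equiv> M3 a 0 0 0 b 0 0 0 c"

lemma M3_nth:
  "M3 a b c d e f g h i $ 1 $ 1 = a" "M3 a b c d e f g h i $ 1 $ 2 = b" "M3 a b c d e f g h i $ 1 $ 3 = c"
  "M3 a b c d e f g h i $ 2 $ 1 = d" "M3 a b c d e f g h i $ 2 $ 2 = e" "M3 a b c d e f g h i $ 2 $ 3 = f"
  "M3 a b c d e f g h i $ 3 $ 1 = g" "M3 a b c d e f g h i $ 3 $ 2 = h" "M3 a b c d e f g h i $ 3 $ 3 = i"
  by (simp_all add: M3_def)

lemma M3_entries: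
  "(A::mat3) = M3 (A$1$1) (A$1$2) (A$1$3) (A$2$1) (A$2$2) (A$2$3) (A$3$1) (A$3$2) (A$3$3)"
  by (simp add: vec_eq_iff forall_3 M3_nth)

lemma M3_eq_iff:
  "M3 a b c d e f g h i = M3 a' b' c' d' e' f' g' h' i' \<longleftrightarrow>
   a = a' \<and> b = b' \<and> c = c' \<and> d = d' \<and> e = e' \<and> f = f' \<and> g = g' \<and> h = h' \<and> i = i'"
  by (metis M3_nth)

lemma M3_mult:
  "M3 a b c d e f g h i ** M3 a' b' c' d' e' f' g' h' i' =
   M3 (a*a'+b*d'+c*g') (a*b'+b*e'+c*h') (a*c'+b*f'+c*i')
      (d*a'+e*d'+f*g') (d*b'+e*e'+f*h') (d*c'+e*f'+f*i')
      (g*a'+h*d'+i*g') (g*b'+h*e'+i*h') (g*c'+h*f'+i*i')"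
  by (simp add: vec_eq_iff forall_3 M3_nth matrix_matrix_mult_def sum_3)

lemma M3_add:
  "M3 a b c d e f g h i + M3 a' b' c' d' e' f' g' h' i' =
   M3 (a+a') (b+b') (c+c') (d+d') (e+e') (f+f') (g+g') (h+h') (i+i')"
  by (simp add: vec_eq_iff forall_3 M3_nth)

lemma M3_scaleR: "x *\<^sub>R M3 a b c d e f g h i = M3 (x*a) (x*b) (x*c) (x*d) (x*e) (x*f) (x*g) (x*h) (x*i)"
  by (simp add: vec_eq_iff forall_3 M3_nth)

lemma M3_transpose: "transpose (M3 a b c d e f g h i) = M3 a d g b e h c f i"
  by (simp add: vec_eq_iff forall_3 M3_nth transpose_def)

lemma M3_trace: "trace (M3 a b c d e f g h i) = a + e + i"
  by (simp add: trace_def sum_3 M3_nth)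

lemma M3_det: "det (M3 a b c d e f g h i) = a*e*i + b*f*g + c*d*h - a*f*h - b*d*i - c*e*g"
  by (simp add: det_3 M3_nth)

lemma M3_one: "mat 1 = M3 1 0 0 0 1 0 0 0 1"
  by (subst M3_entries) (simp add: mat_def)

lemma Rot_M3: "Rot \<theta> = M3 1 0 0 0 (cos \<theta>) (- sin \<theta>) 0 (sin \<theta>) (cos \<theta>)"
  by (simp add: Rot_def M3_def)

lemma Rot_add: "Rot a ** Rot b = Rot (a + b)"
  by (simp add: Rot_M3 M3_mult cos_add sin_add M3_eq_iff)

lemma Rot_add_left: "X ** Rot a ** Rot b = X ** Rot (a + b)"
  by (simp add: Rot_add flip: matrix_mul_assoc)

lemma Rot_zero: "Rot 0 = mat 1"
  by (simp add: Rot_M3 M3_one)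

lemma Rot_transpose: "transpose (Rot a) = Rot (- a)"
  by (simp add: Rot_M3 M3_transpose)

lemma Rot_SO3: "Rot a \<in> SO3"
  by (simp add: SO3_def Rot_transpose Rot_add Rot_zero) (simp add: Rot_M3 M3_det)

lemma Rot_120: "Rot (2 * pi / 3) = M3 1 0 0 0 (- 1 / 2) (- (sqrt 3 / 2)) 0 (sqrt 3 / 2) (- 1 / 2)"
proof -
  have sin: "sin (2 * pi / 3) = sqrt 3 / 2"
    using sin_120' by (simp add: mult.commute)
  show ?thesis
    unfolding Rot_M3 cos_120 sin by simp
qed

lemma diag3_Rot_commute: "diag3 a b b ** Rot \<theta> = Rot \<theta> ** diag3 a b b"
  by (simp add: Rot_M3 M3_mult mult.commute)

definition boost :: "real \<Rightarrow> mat3" where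
  "boost s = M3 (cosh s) (sinh s) 0 (sinh s) (cosh s) 0 0 0 1"

lemma boost_add_left: "X ** boost a ** boost b = X ** boost (a + b)"
proof -
  have "boost a ** boost b = boost (a + b)"
    by (simp add: boost_def M3_mult cosh_add sinh_add M3_eq_iff algebra_simps)
  then show ?thesis
    by (simp flip: matrix_mul_assoc)
qed

lemma boost_zero: "boost 0 = mat 1"
  by (simp add: boost_def M3_one)

lemma boost_transpose: "transpose (boost s) = boost s"
  by (simp add: boost_def M3_transpose)

section \<open>Points of X and the matrix of an isometry\<close>

lemma SO3_invertible: "K \<in> SO3 \<Longrightarrow> invertible K"
  by (auto simp: SO3_def invertible_left_inverse)

lemma SO3_matrix_inv: "K \<in> SO3 \<Longrightarrow> matrix_inv K = transpose K"
  by (rule matrix_inv_eq) (simp add: SO3_def matrix_left_right_inverse)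

lemma SL3_invertible: "g \<in> SL3 \<Longrightarrow> invertible g"
  by (simp add: SL3_def invertible_det_nz)

lemma matrix_inv_SL3: "g \<in> SL3 \<Longrightarrow> matrix_inv g \<in> SL3"
  by (simp add: SL3_def det_matrix_inv SL3_invertible)

lemma invertible_mstar: "invertible A \<Longrightarrow> invertible (mstar A)"
  unfolding mstar_def by (intro transpose_invertible invertible_matrix_inv)

lemma mstar_mult:
  assumes "invertible A" "invertible B"
  shows "mstar (A ** B) = mstar A ** mstar B"
  by (simp add: mstar_def matrix_inv_mult[OF assms] matrix_transpose_mul)

lemma mstar_SO3: "K \<in> SO3 \<Longrightarrow> mstar K = K"
  by (simp add: mstar_def SO3_matrix_inv)

lemma mstar_mstar: "invertible A \<Longrightarrow> mstar (mstar A) = A"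
  by (simp add: mstar_def matrix_inv_transpose invertible_matrix_inv matrix_inv_eq[OF matrix_inv_left])

lemma mstar_symmetric: "transpose Q = Q \<Longrightarrow> invertible Q \<Longrightarrow> mstar Q = matrix_inv Q"
  by (metis mstar_def matrix_inv_transpose)

lemma act_cls: "act g (cls M) = cls (g ** M)"
  by (simp add: act_def cls_def image_image matrix_mul_assoc)

lemma inv_at_cls:
  assumes "invertible M"
  shows "inv_at B (cls M) = cls (B ** transpose B ** mstar M)"
  unfolding inv_at_def cls_def image_image
proof (rule image_cong[OF refl])
  fix K assume "K \<in> SO3"
  then show "B ** transpose B ** mstar (M ** K) = B ** transpose B ** mstar M ** K"
    by (simp add: mstar_mult[OF assms SO3_invertible] mstar_SO3 matrix_mul_assoc)
qed

lemma act_inv_at_act_inv_at_cls: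
  assumes "invertible B" "R \<in> SO3" "invertible M"
  shows "(act R \<circ> inv_at B \<circ> act R \<circ> inv_at B) (cls M) =
    cls (R ** (B ** transpose B) ** R ** matrix_inv (B ** transpose B) ** M)"
proof -
  let ?Q = "B ** transpose B"
  have Q: "invertible ?Q" "transpose ?Q = ?Q"
    using assms(1) by (simp_all add: invertible_mult transpose_invertible matrix_transpose_mul)
  have R: "invertible R"
    using assms(2) by (rule SO3_invertible)
  have QM: "invertible (?Q ** mstar M)" and RQM: "invertible (R ** (?Q ** mstar M))"
    using Q R assms(3) by (simp_all add: invertible_mult invertible_mstar)
  have "mstar (R ** (?Q ** mstar M)) = mstar R ** (mstar ?Q ** mstar (mstar M))"
    by (simp only: mstar_mult[OF R QM] mstar_mult[OF Q(1) invertible_mstar[OF assms(3)]])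
  also have "\<dots> = R ** (matrix_inv ?Q ** M)"
    by (simp only: mstar_SO3[OF assms(2)] mstar_symmetric[OF Q(2,1)] mstar_mstar[OF assms(3)])
  finally have mstar_RQM: "mstar (R ** (?Q ** mstar M)) = R ** (matrix_inv ?Q ** M)" .
  have "(act R \<circ> inv_at B \<circ> act R \<circ> inv_at B) (cls M) = act R (inv_at B (cls (R ** (?Q ** mstar M))))"
    by (simp only: comp_apply inv_at_cls[OF assms(3)] act_cls)
  also have "\<dots> = cls (R ** (?Q ** (R ** (matrix_inv ?Q ** M))))"
    by (simp only: inv_at_cls[OF RQM] mstar_RQM act_cls)
  finally show ?thesis
    by (simp only: matrix_mul_assoc)
qed

lemma cls_eqD:
  assumes "cls A = cls B"
  obtains K where "K \<in> SO3" "B = A ** K"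
proof -
  have "B \<in> cls B"
    unfolding cls_def SO3_def by (rule image_eqI[of _ _ "mat 1"]) simp_all
  then show ?thesis
    using assms that unfolding cls_def by auto
qed

lemma commutes_gram_if_conj_SO3:
  fixes K M :: mat3
  assumes K: "transpose K ** K = mat 1" and M: "invertible M"
    and L: "matrix_inv M ** K ** M \<in> SO3"
  shows "K ** (M ** transpose M) = (M ** transpose M) ** K"
proof -
  let ?L = "matrix_inv M ** K ** M"
  have conj_eq: "M ** ?L = K ** M"
    by (simp add: matrix_mul_assoc matrix_inv_right[OF M])
  have "?L ** transpose ?L = mat 1"
    using L by (simp add: SO3_def matrix_left_right_inverse)
  then have "M ** transpose M = M ** (?L ** transpose ?L) ** transpose M"
    by simp
  also have "\<dots> = (M ** ?L) ** transpose (M ** ?L)"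
    by (simp add: matrix_transpose_mul matrix_mul_assoc)
  also have "\<dots> = K ** (M ** transpose M) ** transpose K"
    by (simp only: conj_eq) (simp add: matrix_transpose_mul matrix_mul_assoc)
  finally have gram: "M ** transpose M = K ** (M ** transpose M) ** transpose K" .
  have "M ** transpose M ** K = K ** (M ** transpose M) ** (transpose K ** K)"
    by (subst gram) (simp only: matrix_mul_assoc)
  then show ?thesis
    using K by simp
qed

lemma eq_one_if_conj_SO3:
  assumes conj: "\<forall>M\<in>SL3. matrix_inv M ** K ** M \<in> SO3"
  shows "K = mat 1"
proof -
  have "matrix_inv (mat 1 :: mat3) = mat 1"
    by (rule matrix_inv_eq) simp
  then have K: "K \<in> SO3"
    using conj[rule_format, of "mat 1"] by (simp add: SL3_def)
  have gram: "K ** (M ** transpose M) = (M ** transpose M) ** K" if "det M = 1" for M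
    using commutes_gram_if_conj_SO3[of K M] conj K that
    by (simp add: SO3_def SL3_def invertible_det_nz)
  \<comment> \<open>Commuting with the Gram matrices of a diagonal matrix and of two shears forces K to be scalar.\<close>
  obtain a b c d e f g h i where Kabc: "K = M3 a b c d e f g h i"
    using M3_entries by blast
  have "K ** diag3 4 1 (1/4) = diag3 4 1 (1/4) ** K"
    using gram[of "diag3 2 1 (1/2)"] by (simp add: M3_mult M3_transpose M3_det)
  then have "b = 0 \<and> c = 0 \<and> d = 0 \<and> f = 0 \<and> g = 0 \<and> h = 0"
    unfolding Kabc M3_mult M3_eq_iff by argo
  then have Kaei: "K = diag3 a e i"
    by (simp add: Kabc)
  have "K ** M3 2 1 0 1 1 0 0 0 1 = M3 2 1 0 1 1 0 0 0 1 ** K"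
       "K ** M3 1 0 0 0 2 1 0 1 1 = M3 1 0 0 0 2 1 0 1 1 ** K"
    using gram[of "M3 1 1 0 0 1 0 0 0 1"] gram[of "M3 1 0 0 0 1 1 0 0 1"]
    by (simp_all add: M3_mult M3_transpose M3_det)
  then have "e = a \<and> i = a"
    unfolding Kaei M3_mult M3_eq_iff by argo
  then have Kaaa: "K = diag3 a a a"
    by (simp add: Kaei)
  have "transpose K ** K = mat 1" "det K = 1"
    using K by (simp_all add: SO3_def)
  then have "a * a = 1" "a * a * a = 1"
    unfolding Kaaa M3_transpose M3_mult M3_one M3_det M3_eq_iff by simp_all
  then have "a = 1"
    by (metis mult_1_left)
  then show ?thesis
    by (simp add: Kaaa M3_one)
qed

lemma act_inj_SL3:
  assumes g: "g \<in> SL3" and "\<forall>P\<in>Xpts. act g P = act g' P"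
  shows "g = g'"
proof -
  define K where "K = matrix_inv g ** g'"
  have "matrix_inv M ** K ** M \<in> SO3" if M: "M \<in> SL3" for M
  proof -
    have "cls M \<in> Xpts"
      using M by (simp add: Xpts_def)
    then have "cls (g ** M) = cls (g' ** M)"
      using assms(2) by (simp add: act_cls[symmetric])
    then obtain K0 where K0: "K0 \<in> SO3" "g' ** M = g ** M ** K0"
      by (rule cls_eqD)
    have "matrix_inv M ** K ** M = matrix_inv M ** matrix_inv g ** (g' ** M)"
      by (simp add: K_def matrix_mul_assoc)
    also have "\<dots> = matrix_inv M ** (matrix_inv g ** g) ** M ** K0"
      by (simp add: K0(2) matrix_mul_assoc)
    finally show ?thesis
      using K0 matrix_inv_left[OF SL3_invertible[OF g]] matrix_inv_left[OF SL3_invertible[OF M]]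
      by simp
  qed
  then have "K = mat 1"
    by (intro eq_one_if_conj_SO3) blast
  then have "g ** K = g"
    by simp
  moreover have "g ** K = g'"
    using matrix_inv_right[OF SL3_invertible[OF g]] by (simp add: K_def matrix_mul_assoc)
  ultimately show ?thesis
    by simp
qed

lemma iso_matrix_eqI:
  assumes "g \<in> SL3" "\<forall>P\<in>Xpts. F P = act g P"
  shows "iso_matrix F = g"
  unfolding iso_matrix_def
proof (rule the_equality)
  fix g' assume g': "g' \<in> SL3 \<and> (\<forall>P\<in>Xpts. F P = act g' P)"
  then have "\<forall>P\<in>Xpts. act g' P = act g P"
    using assms(2) by metis
  then show "g' = g"
    using act_inj_SL3 g' by blast
qed (use assms in blast)

lemma iso_matrix_inv_into:
  assumes g: "g \<in> SL3" and F: "\<forall>P\<in>Xpts. F P = act g P"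
  shows "iso_matrix (inv_into Xpts F) = matrix_inv g"
proof (rule iso_matrix_eqI[OF matrix_inv_SL3[OF g]], rule ballI)
  fix P assume "P \<in> Xpts"
  have act_inv: "act g (act (matrix_inv g) P) = P" "act (matrix_inv g) (act g P) = P" for P
    using matrix_inv_right[OF SL3_invertible[OF g]] matrix_inv_left[OF SL3_invertible[OF g]]
    by (simp_all add: act_def image_image matrix_mul_assoc)
  have "inj_on F Xpts"
    using F act_inv(2) by (metis inj_onI)
  moreover have "act (matrix_inv g) P \<in> Xpts"
    using \<open>P \<in> Xpts\<close> matrix_inv_SL3[OF g]
    by (auto simp: Xpts_def act_cls SL3_def det_mul)
  ultimately show "inv_into Xpts F P = act (matrix_inv g) P"
    using F act_inv(1) by (simp add: inv_into_f_eq)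
qed

section \<open>The matrix exponential of a conjugated diagonal matrix\<close>

lemma vec_sumsI:
  fixes f :: "nat \<Rightarrow> 'a::real_normed_vector^'n"
  assumes "\<And>i. (\<lambda>n. f n $ i) sums l $ i"
  shows "f sums l"
  using assms unfolding sums_def by (intro vec_tendstoI) simp

lemma matrix_add_rdistrib: "(A + B) ** C = A ** C + B ** C"
  by (simp add: matrix_matrix_mult_def vec_eq_iff sum.distrib distrib_right)

lemma bounded_linear_matrix_sandwich:
  fixes P :: "real^'n^'m" and P' :: "real^'k^'l"
  shows "bounded_linear (\<lambda>X::real^'l^'n. P ** X ** P')"
proof -
  have "linear (\<lambda>X::real^'l^'n. P ** X ** P')"
    by (rule linearI)
      (simp_all add: matrix_add_ldistrib matrix_add_rdistrib matrix_scalar_ac scalar_matrix_assoc)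
  then show ?thesis
    by (simp add: linear_conv_bounded_linear)
qed

lemma matpow_diag3: "matpow (diag3 a b c) n = diag3 (a ^ n) (b ^ n) (c ^ n)"
  by (induction n) (simp_all add: M3_one M3_mult)

lemma matpow_conj:
  assumes "P ** P' = mat 1"
  shows "matpow (P ** A ** P') n = P ** matpow A n ** P'"
proof (induction n)
  case (Suc n)
  have "P' ** P = mat 1"
    using assms matrix_left_right_inverse by blast
  then have "P ** A ** P' ** (P ** matpow A n ** P') = P ** (A ** matpow A n) ** P'"
    by (metis matrix_mul_assoc matrix_mul_lid)
  then show ?case
    using Suc by simp
qed (use assms in simp)

lemma mexp_series_diag3:
  "(\<lambda>n. (1 / fact n) *\<^sub>R matpow (diag3 a b c) n) sums diag3 (exp a) (exp b) (exp c)"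
proof (intro vec_sumsI)
  have exp: "(\<lambda>n. x ^ n / fact n) sums exp x" for x :: real
    using exp_converges[of x] by (simp add: divide_inverse mult.commute)
  fix i j :: 3
  show "(\<lambda>n. ((1 / fact n) *\<^sub>R matpow (diag3 a b c) n) $ i $ j) sums diag3 (exp a) (exp b) (exp c) $ i $ j"
    using exhaust_3[of i] exhaust_3[of j] by (auto simp: matpow_diag3 M3_scaleR M3_nth exp)
qed

lemma mexp_conj:
  assumes "P ** P' = mat 1" and "(\<lambda>n. (1 / fact n) *\<^sub>R matpow A n) sums E"
  shows "mexp (P ** A ** P') = P ** E ** P'"
proof -
  have "(\<lambda>n. P ** ((1 / fact n) *\<^sub>R matpow A n) ** P') sums (P ** E ** P')"
    by (rule bounded_linear.sums[OF bounded_linear_matrix_sandwich assms(2)])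
  then have "(\<lambda>n. (1 / fact n) *\<^sub>R matpow (P ** A ** P') n) sums (P ** E ** P')"
    by (simp add: matpow_conj[OF assms(1)] matrix_scalar_ac scalar_matrix_assoc)
  then show ?thesis
    unfolding mexp_def by (rule sums_unique[symmetric])
qed

section \<open>The Gram matrix of B\<close>

definition cartan :: "real \<Rightarrow> real \<Rightarrow> mat3" where
  "cartan r t = diag3 (exp (2 * r)) (exp (t / 2 - r)) (exp (- r - t / 2))"

definition gram :: "real \<Rightarrow> real \<Rightarrow> real \<Rightarrow> real \<Rightarrow> real \<Rightarrow> mat3" where
  "gram r s t \<phi> \<psi> =
     Rot \<psi> ** cartan r t ** Rot \<phi> ** boost (2 * s) ** Rot (- \<phi>) ** cartan r t ** Rot (- \<psi>)"

lemma cartan_inverse_left: "X ** cartan r t ** cartan (- r) (- t) = X"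
  by (simp add: cartan_def M3_mult M3_one[symmetric] flip: matrix_mul_assoc exp_add)

lemma cartan_transpose: "transpose (cartan r t) = cartan r t"
  by (simp add: cartan_def M3_transpose)

lemma mexp_cartan_part:
  "mexp (r *\<^sub>R p0 + t *\<^sub>R (Rot (\<beta>/2) ** p1 ** Rot (-\<beta>/2))) = Rot (\<beta>/2) ** cartan r t ** Rot (- (\<beta>/2))"
proof -
  have "r *\<^sub>R p0 + t *\<^sub>R (Rot (\<beta>/2) ** p1 ** Rot (-\<beta>/2)) =
      Rot (\<beta>/2) ** diag3 (2 * r) (t / 2 - r) (- r - t / 2) ** Rot (- (\<beta>/2))"
    using sin_cos_squared_add[of "\<beta>/2"]
    unfolding p0_def p1_def M3_def[symmetric] Rot_M3 M3_mult M3_scaleR M3_add M3_eq_iff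
      cos_minus sin_minus minus_divide_left[symmetric]
    by algebra
  then show ?thesis
    by (simp add: mexp_conj[OF _ mexp_series_diag3] Rot_add Rot_zero cartan_def)
qed

lemma mexp_boost_part: "mexp (s *\<^sub>R (Rot \<alpha> ** f1 ** Rot (- \<alpha>))) = Rot \<alpha> ** boost s ** Rot (- \<alpha>)"
proof -
  define h :: real where "h = sqrt 2 / 2"
  define U where "U = M3 h h 0 h (- h) 0 0 0 1"
  have hh2: "h * h = 1 / 2"
    by (simp add: h_def)
  then have hh: "h * (h * x) = x / 2" for x
    by (simp flip: mult.assoc)
  \<comment> \<open>U is the orthogonal reflection diagonalizing f1.\<close>
  have "U ** U = mat 1"
    by (simp add: U_def M3_mult M3_one M3_eq_iff hh2)
  then have inv: "(Rot \<alpha> ** U) ** (U ** Rot (- \<alpha>)) = mat 1"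
    by (metis Rot_add Rot_zero add.right_inverse matrix_mul_assoc matrix_mul_rid)
  have "s *\<^sub>R (Rot \<alpha> ** f1 ** Rot (- \<alpha>)) = Rot \<alpha> ** (s *\<^sub>R f1) ** Rot (- \<alpha>)"
    by (simp add: matrix_scalar_ac scalar_matrix_assoc)
  also have "s *\<^sub>R f1 = U ** diag3 s (- s) 0 ** U"
    by (simp add: f1_def M3_def[symmetric] U_def M3_mult M3_scaleR M3_eq_iff algebra_simps hh)
  finally have "s *\<^sub>R (Rot \<alpha> ** f1 ** Rot (- \<alpha>)) = (Rot \<alpha> ** U) ** diag3 s (- s) 0 ** (U ** Rot (- \<alpha>))"
    by (simp add: matrix_mul_assoc)
  then have "mexp (s *\<^sub>R (Rot \<alpha> ** f1 ** Rot (- \<alpha>))) =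
      (Rot \<alpha> ** U) ** diag3 (exp s) (exp (- s)) (exp 0) ** (U ** Rot (- \<alpha>))"
    by (simp only: mexp_conj[OF inv mexp_series_diag3])
  also have "\<dots> = Rot \<alpha> ** (U ** diag3 (exp s) (exp (- s)) (exp 0) ** U) ** Rot (- \<alpha>)"
    by (simp only: matrix_mul_assoc)
  also have "U ** diag3 (exp s) (exp (- s)) (exp 0) ** U = boost s"
    by (simp add: U_def boost_def cosh_def sinh_def M3_mult M3_eq_iff algebra_simps hh)
  finally show ?thesis .
qed

lemma Bmat_gram: "Bmat r s t \<alpha> \<beta> ** transpose (Bmat r s t \<alpha> \<beta>) = gram r s t (\<alpha> - \<beta>/2) (\<beta>/2)"
  unfolding Bmat_def mexp_cartan_part mexp_boost_part
  by (simp add: gram_def matrix_transpose_mul Rot_transpose boost_transpose cartan_transpose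
      Rot_add_left boost_add_left Rot_zero matrix_mul_assoc algebra_simps)

lemma gram_inverse: "gram r s t \<phi> \<psi> ** gram (- r) (- s) (- t) \<phi> \<psi> = mat 1"
  by (simp add: gram_def Rot_add_left boost_add_left cartan_inverse_left Rot_zero boost_zero
      Rot_add matrix_mul_assoc)

lemma gram_symmetric: "transpose (gram r s t \<phi> \<psi>) = gram r s t \<phi> \<psi>"
  by (simp add: gram_def matrix_transpose_mul Rot_transpose boost_transpose cartan_transpose
      matrix_mul_assoc)

lemma gram_congruence:
  "gram r s t \<phi> \<psi> = (Rot \<psi> ** diag3 (exp (2 * r)) (exp (- r)) (exp (- r))) ** gram 0 s t \<phi> 0 **
     transpose (Rot \<psi> ** diag3 (exp (2 * r)) (exp (- r)) (exp (- r)))"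
proof -
  have "diag3 (exp (2 * r)) (exp (- r)) (exp (- r)) ** cartan 0 t = cartan r t"
       "cartan 0 t ** diag3 (exp (2 * r)) (exp (- r)) (exp (- r)) = cartan r t"
    by (simp_all add: cartan_def M3_mult M3_eq_iff flip: exp_add)
  then have split: "X ** diag3 (exp (2 * r)) (exp (- r)) (exp (- r)) ** cartan 0 t = X ** cartan r t"
       "X ** cartan 0 t ** diag3 (exp (2 * r)) (exp (- r)) (exp (- r)) = X ** cartan r t" for X :: mat3
    by (simp_all flip: matrix_mul_assoc)
  show ?thesis
    by (simp add: split gram_def matrix_transpose_mul Rot_transpose M3_transpose Rot_zero
        matrix_mul_assoc)
qed

section \<open>The trace of the twisted Gram matrix\<close>

lemma trace_RXRY_gram0:
  "trace (Rot (2 * pi / 3) ** gram 0 s t \<phi> 0 ** Rot (2 * pi / 3) ** gram 0 (- s) (- t) \<phi> 0) =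
     - (3/2) * cosh (2 * s) * cosh (2 * t) + (9/4) * (cosh (2 * s))^2 - 3/4
     - 3 * (sin (2 * \<phi>))^2 * (sinh s)^4 * (sinh t)^2"
proof -
  define x y C H c w k m where defs: "x = exp (t / 2)" "y = exp (- (t / 2))"
    "C = cosh (2 * s)" "H = sinh (2 * s)" "c = cos \<phi>" "w = sin \<phi>" "k = sqrt 3 / 2" "m = - 1 / (2::real)"
  have rel: "C * C - H * H = 1" "c * c + w * w = 1" "x * y = 1" "4 * k * k = 3" "2 * m = - 1"
    using cosh_square_eq[of "2 * s"] sin_cos_squared_add[of \<phi>]
    by (simp_all add: defs power2_eq_square flip: exp_add)
  have R: "Rot (2 * pi / 3) = M3 1 0 0 0 m (- k) 0 k m"
    by (simp add: Rot_120 defs)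
  have boost2: "boost (2 * s) = M3 C H 0 H C 0 0 0 1" "boost (- (2 * s)) = M3 C (- H) 0 (- H) C 0 0 0 1"
    by (simp_all add: boost_def defs)
  have W: "Rot \<phi> = M3 1 0 0 0 c (- w) 0 w c" "Rot (- \<phi>) = M3 1 0 0 0 c w 0 (- w) c"
    by (simp_all add: Rot_M3 defs)
  have Q: "gram 0 s t \<phi> 0 =
      diag3 1 x y ** (M3 1 0 0 0 c (- w) 0 w c ** M3 C H 0 H C 0 0 0 1 ** M3 1 0 0 0 c w 0 (- w) c) ** diag3 1 x y"
    by (simp add: gram_def cartan_def W boost2 defs matrix_mul_assoc Rot_zero)
  have Q': "gram 0 (- s) (- t) \<phi> 0 =
      diag3 1 y x ** (M3 1 0 0 0 c (- w) 0 w c ** M3 C (- H) 0 (- H) C 0 0 0 1 ** M3 1 0 0 0 c w 0 (- w) c) ** diag3 1 y x"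
    by (simp add: gram_def cartan_def W boost2 defs matrix_mul_assoc Rot_zero)
  let ?P = "- 48 * C * (x^4 + y^4) + 144 * C^2 - 48 - 48 * (w * c)^2 * (C - 1)^2 * (x^2 - y^2)^2"
  have "64 * trace (Rot (2 * pi / 3) ** gram 0 s t \<phi> 0 ** Rot (2 * pi / 3) ** gram 0 (- s) (- t) \<phi> 0) = ?P"
    unfolding R Q Q' M3_mult M3_trace using rel by algebra
  then have "trace (Rot (2 * pi / 3) ** gram 0 s t \<phi> 0 ** Rot (2 * pi / 3) ** gram 0 (- s) (- t) \<phi> 0) =
      ?P / 64"
    by (simp only: eq_divide_eq mult.commute) simp
  also have "\<dots> = - (3/2) * C * ((x^4 + y^4) / 2) + (9/4) * C^2 - 3/4
      - 3 * (2 * w * c)^2 * ((C - 1) / 2)^2 * ((x^2 - y^2) / 2)^2"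
    by (simp add: divide_simps)
  moreover have "cosh (2 * s) = C" "cosh (2 * t) = (x^4 + y^4) / 2" "sinh t = (x^2 - y^2) / 2"
    by (simp_all add: defs cosh_def sinh_def flip: exp_of_nat_mult)
  moreover have "(sinh s)^4 = ((C - 1) / 2)^2"
  proof -
    have "(sinh s)^4 = ((sinh s)^2)^2"
      by (simp flip: power_mult)
    also have "(sinh s)^2 = (C - 1) / 2"
      using cosh_square_eq[of s] by (simp add: defs cosh_double)
    finally show ?thesis .
  qed
  moreover have "sin (2 * \<phi>) = 2 * w * c"
    by (simp add: sin_double defs)
  ultimately show ?thesis
    by (simp only:)
qed

lemma trace_RXRY_gram:
  "trace (Rot (2 * pi / 3) ** gram r s t \<phi> \<psi> ** Rot (2 * pi / 3) ** gram (- r) (- s) (- t) \<phi> \<psi>) =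
     - (3/2) * cosh (2 * s) * cosh (2 * t) + (9/4) * (cosh (2 * s))^2 - 3/4
     - 3 * (sin (2 * \<phi>))^2 * (sinh s)^4 * (sinh t)^2"
proof -
  let ?R = "Rot (2 * pi / 3)"
  define C where "C = Rot \<psi> ** diag3 (exp (2 * r)) (exp (- r)) (exp (- r))"
  define D where "D = Rot \<psi> ** diag3 (exp (- (2 * r))) (exp r) (exp r)"
  have diag_Rot: "X ** diag3 a b b ** Rot \<theta> = X ** Rot \<theta> ** diag3 a b b" for X a b \<theta>
    by (simp add: diag3_Rot_commute flip: matrix_mul_assoc)
  have "C ** ?R = ?R ** C" "transpose C ** ?R = ?R ** transpose C"
    by (simp_all add: C_def matrix_transpose_mul M3_transpose Rot_transpose diag_Rot
        diag3_Rot_commute Rot_add Rot_add_left matrix_mul_assoc add.commute)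
  moreover have "transpose C ** D = mat 1"
    by (simp add: C_def D_def matrix_transpose_mul M3_transpose Rot_transpose Rot_add_left Rot_zero
        M3_mult M3_one matrix_mul_assoc flip: exp_add)
  moreover have "gram r s t \<phi> \<psi> = C ** gram 0 s t \<phi> 0 ** transpose C"
      "gram (- r) (- s) (- t) \<phi> \<psi> = D ** gram 0 (- s) (- t) \<phi> 0 ** transpose D"
    using gram_congruence[of r] gram_congruence[of "- r"] by (simp_all add: C_def D_def)
  ultimately show ?thesis
    by (simp add: trace_RXRY_congruence trace_RXRY_gram0)
qed

lemma trace_matrix_inv_RXRY_gram:
  "trace (matrix_inv (Rot (2 * pi / 3) ** gram r s t \<phi> \<psi> ** Rot (2 * pi / 3) ** gram (- r) (- s) (- t) \<phi> \<psi>)) =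
   trace (Rot (2 * pi / 3) ** gram r s t \<phi> \<psi> ** Rot (2 * pi / 3) ** gram (- r) (- s) (- t) \<phi> \<psi>)"
proof -
  have "trace (matrix_inv (Rot (2 * pi / 3) ** gram r s t \<phi> \<psi> ** Rot (2 * pi / 3) ** gram (- r) (- s) (- t) \<phi> \<psi>)) =
      trace (Rot (2 * pi / 3) ** gram (- r) (- s) (- t) \<phi> \<psi> ** Rot (2 * pi / 3) ** gram r s t \<phi> \<psi>)"
    using Rot_SO3[of "2 * pi / 3"]
    by (intro trace_matrix_inv_RXRY) (simp_all add: SO3_def matrix_left_right_inverse gram_inverse gram_symmetric)
  then show ?thesis
    using trace_RXRY_gram[of "- r" "- s" "- t" \<phi> \<psi>] by (simp add: trace_RXRY_gram)
qed

lemma rho_baba_act: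
  assumes "P \<in> Xpts"
  shows "(rho_b \<circ> rho_a r s t \<alpha> \<beta> \<circ> rho_b \<circ> rho_a r s t \<alpha> \<beta>) P =
    act (Rot (2 * pi / 3) ** gram r s t (\<alpha> - \<beta>/2) (\<beta>/2) ** Rot (2 * pi / 3) **
      gram (- r) (- s) (- t) (\<alpha> - \<beta>/2) (\<beta>/2)) P"
proof -
  let ?B = "Bmat r s t \<alpha> \<beta>" and ?Q = "gram r s t (\<alpha> - \<beta>/2) (\<beta>/2)"
    and ?Q' = "gram (- r) (- s) (- t) (\<alpha> - \<beta>/2) (\<beta>/2)"
  have QQ': "?Q ** ?Q' = mat 1"
    by (rule gram_inverse)
  then have "?B ** (transpose ?B ** ?Q') = mat 1"
    by (simp add: Bmat_gram matrix_mul_assoc)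
  then have "invertible ?B"
    using invertible_right_inverse by blast
  obtain M where "M \<in> SL3" "P = cls M"
    using assms by (auto simp: Xpts_def)
  then show ?thesis
    using act_inv_at_act_inv_at_cls[OF \<open>invertible ?B\<close> Rot_SO3 SL3_invertible[OF \<open>M \<in> SL3\<close>]]
    unfolding rho_a_def rho_b_def Bmat_gram matrix_inv_eq[OF QQ']
    by (simp add: act_cls matrix_mul_assoc)
qed

lemma RXRY_gram_SL3:
  "Rot (2 * pi / 3) ** gram r s t \<phi> \<psi> ** Rot (2 * pi / 3) ** gram (- r) (- s) (- t) \<phi> \<psi> \<in> SL3"
  using Rot_SO3[of "2 * pi / 3"] gram_inverse[of r s t \<phi> \<psi>]
  by (simp add: SL3_def SO3_def det_mul flip: det_mul[of "gram r s t \<phi> \<psi>"])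

theorem proposition4p5:
  fixes r s t \<alpha> \<beta> :: real
  assumes "s \<ge> 0" and "t \<ge> 0"
  defines "F \<equiv> rho_b \<circ> rho_a r s t \<alpha> \<beta> \<circ> rho_b \<circ> rho_a r s t \<alpha> \<beta>"
      and "\<theta> \<equiv> 2 * \<alpha> - \<beta>"
  shows "trace (iso_matrix F) = trace (iso_matrix (inv_into Xpts F))
       \<and> trace (iso_matrix F) =
           - (3/2) * cosh (2 * s) * cosh (2 * t) + (9/4) * (cosh (2 * s))^2 - 3/4
           - 3 * (sin \<theta>)^2 * (sinh s)^4 * (sinh t)^2"
proof -
  define g where "g = Rot (2 * pi / 3) ** gram r s t (\<alpha> - \<beta>/2) (\<beta>/2) ** Rot (2 * pi / 3) **
    gram (- r) (- s) (- t) (\<alpha> - \<beta>/2) (\<beta>/2)"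
  have "g \<in> SL3"
    by (simp add: g_def RXRY_gram_SL3)
  moreover have "\<forall>P\<in>Xpts. F P = act g P"
    using rho_baba_act unfolding F_def g_def by blast
  ultimately have "iso_matrix F = g" "iso_matrix (inv_into Xpts F) = matrix_inv g"
    by (simp_all add: iso_matrix_eqI iso_matrix_inv_into)
  moreover have "trace (matrix_inv g) = trace g"
    by (simp add: g_def trace_matrix_inv_RXRY_gram)
  moreover have "2 * (\<alpha> - \<beta>/2) = \<theta>"
    by (simp add: \<theta>_def)
  ultimately show ?thesis
    using trace_RXRY_gram[of r s t "\<alpha> - \<beta>/2" "\<beta>/2"] by (simp add: g_def)
qed

end
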